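(* Let $D$ be a planar distributive lattice with a fixed planar diagram having two distinct join-reducible coatoms $c_\ell$ and $c_r$, $c_\ell$ to the left of $c_r$, and let $e=c_\ell\wedge c_r$. Then: (i) $J(D)\setminus{\downarrow}e=\{\mathrm{ljsp}(c_\ell),\mathrm{rjsp}(c_r)\}$ and $\mathrm{ljsp}(c_\ell)\ne\mathrm{rjsp}(c_r)$; (ii) $\{\mathrm{ljsp}(c_\ell),\mathrm{rjsp}(c_r)\}$ is the set of maximal elements of $J(D)$, and $\mathrm{ljsp}(c_\ell)$ and $\mathrm{rjsp}(c_r)$ are incomparable; (iii) $\mathrm{ljsp}(c_\ell)\not\le e\vee\mathrm{rjsp}(c_r)$ and $\mathrm{rjsp}(c_r)\not\le e\vee\mathrm{ljsp}(c_\ell)$; (iv) $e\not\le\mathrm{ljsp}(c_\ell)$ and $e\not\le\mathrm{rjsp}(c_r)$.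
   Context: A planar lattice is a finite lattice with a fixed Hasse diagram drawn in the plane without crossing edges; $\mathrm{LBound}(D)$ and $\mathrm{RBound}(D)$ denote its left and right boundary chains. $J(D)$ is the set of nonzero join-irreducible elements, $J_0(D)=J(D)\cup\{0\}$, ${\downarrow}x=\{y:y\le x\}$. For $x\in D$, $\mathrm{ljsp}(x)$ is the largest element of $\mathrm{LBound}(D)\cap J_0(D)\cap{\downarrow}x$ and $\mathrm{rjsp}(x)$ is the largest element of $\mathrm{RBound}(D)\cap J_0(D)\cap{\downarrow}x$. *)

theory Defs
  imports "HOL-Analysis.Analysis"
begin

definition covers :: "'a::order \<Rightarrow> 'a \<Rightarrow> bool" where
  "covers a b \<longleftrightarrow> a < b \<and> \<not> (\<exists>z. a < z \<and> z < b)"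

definition coatom :: "'a::bounded_lattice \<Rightarrow> bool" where
  "coatom c \<longleftrightarrow> covers c top"

definition Jirr :: "'a::bounded_lattice set" where
  "Jirr = {x. x \<noteq> bot \<and> (\<forall>y z. x = sup y z \<longrightarrow> x = y \<or> x = z)}"

definition Jirr0 :: "'a::bounded_lattice set" where
  "Jirr0 = Jirr \<union> {bot}"

text \<open>A planar (Hasse) diagram: injective placement, every covering edge goes strictly
upwards, edges are straight segments, two distinct edges meet at most in common endpoints
(this also forbids a vertex lying in the interior of an edge).\<close>
definition planar_diagram :: "('a::bounded_lattice \<Rightarrow> real \<times> real) \<Rightarrow> bool" where
  "planar_diagram pos \<longleftrightarrow>
     inj pos \<and>
     (\<forall>a b. covers a b \<longrightarrow> snd (pos a) < snd (pos b)) \<and>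
     (\<forall>a b c d. covers a b \<and> covers c d \<and> (a, b) \<noteq> (c, d) \<longrightarrow>
        closed_segment (pos a) (pos b) \<inter> closed_segment (pos c) (pos d)
          \<subseteq> {pos a, pos b} \<inter> {pos c, pos d})"

definition LBound :: "('a::bounded_lattice \<Rightarrow> real \<times> real) \<Rightarrow> 'a set" where
  "LBound pos = {x. \<forall>a b. covers a b \<longrightarrow>
      (\<forall>t::real. t > 0 \<longrightarrow> (fst (pos x) - t, snd (pos x)) \<notin> closed_segment (pos a) (pos b))}"

definition RBound :: "('a::bounded_lattice \<Rightarrow> real \<times> real) \<Rightarrow> 'a set" where
  "RBound pos = {x. \<forall>a b. covers a b \<longrightarrow>
      (\<forall>t::real. t > 0 \<longrightarrow> (fst (pos x) + t, snd (pos x)) \<notin> closed_segment (pos a) (pos b))}"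

definition ljsp :: "('a::bounded_lattice \<Rightarrow> real \<times> real) \<Rightarrow> 'a \<Rightarrow> 'a" where
  "ljsp pos x = (GREATEST y. y \<in> LBound pos \<inter> Jirr0 \<inter> {z. z \<le> x})"

definition rjsp :: "('a::bounded_lattice \<Rightarrow> real \<times> real) \<Rightarrow> 'a \<Rightarrow> 'a" where
  "rjsp pos x = (GREATEST y. y \<in> RBound pos \<inter> Jirr0 \<inter> {z. z \<le> x})"

definition is_chain :: "'a::order set \<Rightarrow> bool" where
  "is_chain C \<longleftrightarrow> (\<forall>a\<in>C. \<forall>b\<in>C. a \<le> b \<or> b \<le> a)"

definition max_chain :: "'a::order set \<Rightarrow> bool" where
  "max_chain C \<longleftrightarrow> is_chain C \<and> (\<forall>D. is_chain D \<and> C \<subseteq> D \<longrightarrow> D = C)"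

definition chain_path :: "('a::order \<Rightarrow> real \<times> real) \<Rightarrow> 'a set \<Rightarrow> (real \<times> real) set" where
  "chain_path pos C = (\<Union>{closed_segment (pos a) (pos b) | a b. a \<in> C \<and> b \<in> C \<and> covers a b})"

definition left_of :: "('a::order \<Rightarrow> real \<times> real) \<Rightarrow> 'a \<Rightarrow> 'a \<Rightarrow> bool" where
  "left_of pos x y \<longleftrightarrow> \<not> x \<le> y \<and> \<not> y \<le> x \<and>
     (\<exists>C. max_chain C \<and> y \<in> C \<and>
        (\<exists>p \<in> chain_path pos C. snd p = snd (pos x) \<and> fst (pos x) < fst p))"

end

theory Submission
  imports Defs
begin

text \<open>In a finite distributive lattice every coatom \<open>c\<close> has a unique join-irreducible \<open>j\<^sub>c\<close>
  not below it, and these are exactly the maximal join-irreducibles; once \<open>cl\<close> and \<open>cr\<close> are known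
  to be the only coatoms, everything except the identification \<open>ljsp cl = j\<^sub>c\<^sub>r\<close> and
  \<open>rjsp cr = j\<^sub>c\<^sub>l\<close> is lattice theory.

  The planar diagram enters through the drawings of maximal chains, which are graphs of continuous
  functions of the height. Two maximal chains that swap sides between two heights meet in a
  common element in between (intermediate value theorem), so the side on which \<open>x\<close> lies of a
  maximal chain through an incomparable \<open>y\<close> does not depend on the chain, and a maximal chain
  through a coatom \<open>c'\<close> cannot separate another coatom \<open>c\<close> from an element below \<open>c\<close> but not
  below \<open>c'\<close>. Hence of three coatoms, ordered from left to right, the middle one \<open>c\<close> would
  have \<open>j\<^sub>c\<close> below it; and \<open>j\<^sub>c\<^sub>r\<close> lies on the left boundary, since a maximal chain
  passing to its left can be rerouted through \<open>cr\<close> without changing sides. The left boundary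
  is a chain, so \<open>ljsp cl = j\<^sub>c\<^sub>r\<close>; mirroring the diagram gives \<open>rjsp cr = j\<^sub>c\<^sub>l\<close>.\<close>

section \<open>Finite orders and maximal chains\<close>

lemma ex_cover_above:
  fixes x y :: "'a::{finite,order}"
  assumes "x < y"
  shows "\<exists>z. covers x z \<and> z \<le> y"
proof -
  have "finite {z. x < z \<and> z \<le> y}" "{z. x < z \<and> z \<le> y} \<noteq> {}"
    using assms by auto
  from finite_has_minimal[OF this] obtain m where m: "x < m" "m \<le> y"
    and minimal: "\<And>z. x < z \<Longrightarrow> z \<le> y \<Longrightarrow> z \<le> m \<Longrightarrow> m = z"
    by blast
  have "covers x m"
    unfolding covers_def using m minimal by (metis order.strict_iff_not order.trans)
  with m show ?thesis by blast
qed

lemma ex_cover_below: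
  fixes x y :: "'a::{finite,order}"
  assumes "x < y"
  shows "\<exists>z. covers z y \<and> x \<le> z"
proof -
  have "finite {z. x \<le> z \<and> z < y}" "{z. x \<le> z \<and> z < y} \<noteq> {}"
    using assms by auto
  from finite_has_maximal[OF this] obtain m where m: "x \<le> m" "m < y"
    and maximal: "\<And>z. x \<le> z \<Longrightarrow> z < y \<Longrightarrow> m \<le> z \<Longrightarrow> m = z"
    by blast
  have "covers m y"
    unfolding covers_def using m maximal by (metis order.strict_iff_not order.trans)
  with m show ?thesis by blast
qed

lemma less_if_covers_less:
  fixes f :: "'a::{finite,order} \<Rightarrow> 'b::order"
  assumes covers_less: "\<And>a b. covers a b \<Longrightarrow> f a < f b"
  shows "x < y \<Longrightarrow> f x < f y"
proof (induction y arbitrary: x rule: measure_induct_rule[of "\<lambda>y. card {z. z < y}"])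
  case (less y)
  obtain w where w: "covers w y" "x \<le> w"
    using ex_cover_below[OF less.prems] by blast
  show ?case
  proof (cases "x = w")
    case True
    with w show ?thesis by (simp add: covers_less)
  next
    case False
    have "w < y"
      using w unfolding covers_def by simp
    then have "card {z. z < w} < card {z. z < y}"
      by (intro psubset_card_mono) auto
    with less.IH False w have "f x < f w"
      by simp
    with covers_less[OF w(1)] show ?thesis
      by simp
  qed
qed

lemma finite_chain_has_greatest:
  fixes S :: "'a::{finite,order} set"
  assumes "is_chain S" "S \<noteq> {}"
  shows "\<exists>m\<in>S. \<forall>x\<in>S. x \<le> m"
proof -
  obtain m where "m \<in> S" "\<forall>b\<in>S. m \<le> b \<longrightarrow> m = b"
    using finite_has_maximal[OF _ assms(2)] by auto
  with assms(1) show ?thesis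
    unfolding is_chain_def by metis
qed

lemma finite_chain_has_least:
  fixes S :: "'a::{finite,order} set"
  assumes "is_chain S" "S \<noteq> {}"
  shows "\<exists>m\<in>S. \<forall>x\<in>S. m \<le> x"
proof -
  obtain m where "m \<in> S" "\<forall>b\<in>S. b \<le> m \<longrightarrow> m = b"
    using finite_has_minimal[OF _ assms(2)] by auto
  with assms(1) show ?thesis
    unfolding is_chain_def by metis
qed

lemma is_chain_subset: "is_chain C \<Longrightarrow> S \<subseteq> C \<Longrightarrow> is_chain S"
  unfolding is_chain_def by blast

lemma is_chain_extends_to_max_chain:
  fixes S :: "'a::{finite,order} set"
  assumes "is_chain S"
  shows "\<exists>C. max_chain C \<and> S \<subseteq> C"
proof -
  let ?A = "{C. is_chain C \<and> S \<subseteq> C}"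
  have "?A \<noteq> {}"
    using assms by blast
  then obtain M where "M \<in> ?A" "\<forall>D\<in>?A. M \<subseteq> D \<longrightarrow> M = D"
    using finite_has_maximal[of ?A] by auto
  then have "max_chain M \<and> S \<subseteq> M"
    unfolding max_chain_def by blast
  then show ?thesis ..
qed

lemma ex_max_chain_mem: "\<exists>C. max_chain C \<and> (x::'a::{finite,order}) \<in> C"
  using is_chain_extends_to_max_chain[of "{x}"] unfolding is_chain_def by auto

lemma ex_max_chain_mem2:
  "(x::'a::{finite,order}) \<le> y \<Longrightarrow> \<exists>C. max_chain C \<and> x \<in> C \<and> y \<in> C"
  using is_chain_extends_to_max_chain[of "{x, y}"] unfolding is_chain_def by auto

lemma max_chain_comparable: "max_chain C \<Longrightarrow> a \<in> C \<Longrightarrow> b \<in> C \<Longrightarrow> a \<le> b \<or> b \<le> a"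
  unfolding max_chain_def is_chain_def by blast

lemma not_mem_max_chain_if_incomparable:
  "max_chain C \<Longrightarrow> y \<in> C \<Longrightarrow> \<not> x \<le> y \<Longrightarrow> \<not> y \<le> x \<Longrightarrow> x \<notin> C"
  using max_chain_comparable by blast

lemma mem_max_chain_if_comparable:
  assumes "max_chain C" "\<forall>c\<in>C. c \<le> z \<or> z \<le> c"
  shows "z \<in> C"
proof -
  have "is_chain (insert z C)"
    using assms unfolding max_chain_def is_chain_def by auto
  with assms(1) show ?thesis
    unfolding max_chain_def by blast
qed

lemma bot_mem_max_chain: "max_chain (C::'a::bounded_lattice set) \<Longrightarrow> bot \<in> C"
  by (rule mem_max_chain_if_comparable) auto

lemma top_mem_max_chain: "max_chain (C::'a::bounded_lattice set) \<Longrightarrow> top \<in> C"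
  by (rule mem_max_chain_if_comparable) auto

text \<open>Anything strictly between consecutive elements would be comparable with the whole chain.\<close>
lemma covers_if_consecutive_in_max_chain:
  assumes C: "max_chain C" and "a \<in> C" "b \<in> C" "a < b"
    and consecutive: "\<not> (\<exists>c\<in>C. a < c \<and> c < b)"
  shows "covers a b"
  unfolding covers_def
proof (intro conjI notI)
  show "a < b" by fact
  assume "\<exists>z. a < z \<and> z < b"
  then obtain z where z: "a < z" "z < b" by blast
  have "\<forall>c\<in>C. c \<le> z \<or> z \<le> c"
  proof
    fix c assume "c \<in> C"
    then have "c \<le> a \<or> a < c" "c < b \<or> b \<le> c"
      using max_chain_comparable[OF C] \<open>a \<in> C\<close> \<open>b \<in> C\<close> by (auto simp: less_le)
    with z consecutive \<open>c \<in> C\<close> show "c \<le> z \<or> z \<le> c"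
      by (meson less_imp_le order_trans)
  qed
  then have "z \<in> C"
    by (rule mem_max_chain_if_comparable[OF C])
  with z consecutive show False
    by blast
qed

lemma max_chain_ex_upper_cover:
  fixes C :: "'a::{finite,order} set"
  assumes C: "max_chain C" and "a \<in> C" "\<exists>x\<in>C. a < x"
  shows "\<exists>b\<in>C. covers a b"
proof -
  have "is_chain {x\<in>C. a < x}"
    using C unfolding max_chain_def is_chain_def by blast
  from finite_chain_has_least[OF this] obtain b
    where b: "b \<in> C" "a < b" "\<forall>x\<in>C. a < x \<longrightarrow> b \<le> x"
    using assms(3) by blast
  have "covers a b"
    by (rule covers_if_consecutive_in_max_chain[OF C \<open>a \<in> C\<close> b(1,2)]) (use b(3) in force)
  with b show ?thesis by blast
qed

lemma max_chain_ex_lower_cover: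
  fixes C :: "'a::{finite,order} set"
  assumes C: "max_chain C" and "b \<in> C" "\<exists>x\<in>C. x < b"
  shows "\<exists>a\<in>C. covers a b"
proof -
  have "is_chain {x\<in>C. x < b}"
    using C unfolding max_chain_def is_chain_def by blast
  from finite_chain_has_greatest[OF this] obtain a
    where a: "a \<in> C" "a < b" "\<forall>x\<in>C. x < b \<longrightarrow> x \<le> a"
    using assms(3) by blast
  have "covers a b"
    by (rule covers_if_consecutive_in_max_chain[OF C a(1) \<open>b \<in> C\<close> a(2)]) (use a(3) in force)
  with a show ?thesis by blast
qed

lemma ex_max_chain_extending_below:
  fixes C :: "'a::{finite,order} set"
  assumes "max_chain C" "a \<le> y"
  shows "\<exists>D. max_chain D \<and> y \<in> D \<and> {z\<in>C. z \<le> a} \<subseteq> D"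
proof -
  have "is_chain ({z\<in>C. z \<le> a} \<union> {y})"
    using assms unfolding max_chain_def is_chain_def by (auto intro: order_trans)
  then show ?thesis
    using is_chain_extends_to_max_chain by blast
qed

lemma ex_max_chain_extending_above:
  fixes C :: "'a::{finite,order} set"
  assumes "max_chain C" "x \<le> b"
  shows "\<exists>E. max_chain E \<and> x \<in> E \<and> {z\<in>C. b \<le> z} \<subseteq> E"
proof -
  have "is_chain ({z\<in>C. b \<le> z} \<union> {x})"
    using assms unfolding max_chain_def is_chain_def by (auto intro: order_trans)
  then show ?thesis
    using is_chain_extends_to_max_chain by blast
qed

section \<open>Join-irreducibles and coatoms\<close>

lemma coatom_less_top: "coatom (c::'a::bounded_lattice) \<Longrightarrow> c < top"
  unfolding coatom_def covers_def by auto

lemma coatom_le_cases: "coatom (c::'a::bounded_lattice) \<Longrightarrow> c \<le> x \<Longrightarrow> x = c \<or> x = top"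
  unfolding coatom_def covers_def
  by (metis order.not_eq_order_implies_strict top_greatest)

lemma sup_coatom_eq_top:
  fixes c x :: "'a::bounded_lattice"
  assumes "coatom c" "\<not> x \<le> c"
  shows "sup x c = top"
  using coatom_le_cases[OF assms(1), of "sup x c"] assms(2) by (metis sup.cobounded1 sup_ge2)

lemma coatom_not_le_coatom:
  fixes c c' :: "'a::bounded_lattice"
  assumes "coatom c" "coatom c'" "c \<noteq> c'"
  shows "\<not> c \<le> c'"
  using coatom_le_cases[OF assms(1)] coatom_less_top[OF assms(2)] assms(3) by fastforce

lemma ex_coatom_ge:
  fixes x :: "'a::{finite,bounded_lattice}"
  assumes "x \<noteq> top"
  shows "\<exists>c. coatom c \<and> x \<le> c"
  using ex_cover_below[of x top] assms unfolding coatom_def by (auto simp: top.not_eq_extremum)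

lemma le_coatom_if_not_le_other:
  fixes x :: "'a::{finite,bounded_lattice}"
  assumes "\<And>c. coatom c \<longleftrightarrow> c = c1 \<or> c = c2" "x \<noteq> top" "\<not> x \<le> c2"
  shows "x \<le> c1"
proof -
  obtain c where "coatom c" "x \<le> c"
    using ex_coatom_ge[OF assms(2)] by blast
  moreover from \<open>coatom c\<close> have "c = c1 \<or> c = c2"
    using assms(1) by simp
  ultimately show ?thesis
    using assms(3) by blast
qed

lemma Jirr_ne_bot: "j \<in> Jirr \<Longrightarrow> j \<noteq> bot"
  by (simp add: Jirr_def)

lemma ex_Jirr_le_not_le:
  fixes x c :: "'a::{finite,bounded_lattice}"
  shows "\<not> x \<le> c \<Longrightarrow> \<exists>j\<in>Jirr. j \<le> x \<and> \<not> j \<le> c"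
proof (induction x rule: measure_induct_rule[of "\<lambda>y. card {z. z < y}"])
  case (less x)
  show ?case
  proof (cases "x \<in> Jirr")
    case True
    with less.prems show ?thesis by blast
  next
    case False
    have "x \<noteq> bot"
      using less.prems by auto
    with False obtain y z where yz: "x = sup y z" "x \<noteq> y" "x \<noteq> z"
      unfolding Jirr_def by auto
    then have "y < x" "z < x"
      by (auto simp: less_le)
    then have "card {w. w < y} < card {w. w < x}" "card {w. w < z} < card {w. w < x}"
      by (auto intro!: psubset_card_mono)
    moreover have "\<not> y \<le> c \<or> \<not> z \<le> c"
      using less.prems yz(1) by auto
    ultimately show ?thesis
      using less.IH \<open>y < x\<close> \<open>z < x\<close> by (meson less_imp_le order_trans)
  qed
qed

lemma ex_Jirr_not_le_coatom:
  fixes c :: "'a::{finite,bounded_lattice}"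
  assumes "coatom c"
  shows "\<exists>j\<in>Jirr. \<not> j \<le> c"
  using ex_Jirr_le_not_le[of top c] coatom_less_top[OF assms] by auto

lemma Jirr_le_sup:
  fixes j u v :: "'a::{distrib_lattice,bounded_lattice}"
  assumes "j \<in> Jirr" "j \<le> sup u v"
  shows "j \<le> u \<or> j \<le> v"
proof -
  have "j = sup (inf j u) (inf j v)"
    using assms(2) by (simp add: inf_absorb1 flip: inf_sup_distrib1)
  with assms(1) have "j = inf j u \<or> j = inf j v"
    unfolding Jirr_def by blast
  then show ?thesis
    by (metis inf.cobounded2)
qed

lemma Jirr_le_or_le_coatom:
  fixes j c x :: "'a::{distrib_lattice,bounded_lattice}"
  assumes "j \<in> Jirr" "coatom c" "\<not> j \<le> c"
  shows "j \<le> x \<or> x \<le> c"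
  using Jirr_le_sup[OF assms(1), of x c] sup_coatom_eq_top[OF assms(2), of x] assms(3) by auto

lemma Jirr_not_le_coatom_unique:
  fixes c j j' :: "'a::{distrib_lattice,bounded_lattice}"
  assumes "coatom c" "j \<in> Jirr" "j' \<in> Jirr" "\<not> j \<le> c" "\<not> j' \<le> c"
  shows "j = j'"
  using Jirr_le_or_le_coatom[OF assms(2,1,4), of j'] Jirr_le_or_le_coatom[OF assms(3,1,5), of j]
    assms(4,5) by auto

lemma Jirr_le_other_coatom:
  fixes c c' j :: "'a::{distrib_lattice,bounded_lattice}"
  assumes "coatom c" "coatom c'" "c \<noteq> c'" "j \<in> Jirr" "\<not> j \<le> c"
  shows "j \<le> c'"
  using Jirr_le_or_le_coatom[OF assms(4,1,5), of c'] coatom_not_le_coatom[OF assms(2,1)] assms(3)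
  by auto

lemma Jirr_not_le_coatom_maximal:
  fixes c j y :: "'a::{distrib_lattice,bounded_lattice}"
  assumes "coatom c" "j \<in> Jirr" "\<not> j \<le> c" "y \<in> Jirr" "j \<le> y"
  shows "j = y"
proof -
  have "\<not> y \<le> c"
    using assms(3,5) order_trans by blast
  with Jirr_not_le_coatom_unique[OF assms(1,2,4,3)] show ?thesis .
qed

text \<open>A maximal element \<open>x\<close> of \<open>{z. \<not> j \<le> z}\<close> is a coatom: if \<open>x < y < top\<close>, then
  \<open>j \<le> y\<close>, and a join-irreducible \<open>i\<close> not below \<open>y\<close> is not above \<open>j\<close> (by maximality of \<open>j\<close>), so
  neither is \<open>sup x i\<close>, whence \<open>i \<le> x \<le> y\<close>.\<close>
lemma maximal_Jirr_not_le_some_coatom: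
  fixes j :: "'a::{finite,distrib_lattice,bounded_lattice}"
  assumes j: "j \<in> Jirr" and maximal: "\<forall>y\<in>Jirr. j \<le> y \<longrightarrow> j = y"
  shows "\<exists>c. coatom c \<and> \<not> j \<le> c"
proof -
  have "\<exists>x\<in>{x. \<not> j \<le> x}. \<forall>b\<in>{x. \<not> j \<le> x}. x \<le> b \<longrightarrow> x = b"
  proof (rule finite_has_maximal)
    show "{x. \<not> j \<le> x} \<noteq> {}"
      using Jirr_ne_bot[OF j] bot_unique by blast
  qed simp
  then obtain x where xj: "\<not> j \<le> x" and xmax: "\<And>b. \<not> j \<le> b \<Longrightarrow> x \<le> b \<Longrightarrow> x = b"
    by blast
  have "coatom x"
    unfolding coatom_def covers_def
  proof (intro conjI notI)
    show "x < top"
      using xj by (metis top_greatest top.not_eq_extremum)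
    assume "\<exists>z. x < z \<and> z < top"
    then obtain y where y: "x < y" "y < top" by blast
    have "j \<le> y"
      using xmax[of y] y(1) by (metis order.strict_iff_order)
    obtain i where i: "i \<in> Jirr" "\<not> i \<le> y"
      using ex_Jirr_le_not_le[of top y] y(2) by (auto simp: less_le_not_le)
    show False
    proof (cases "j \<le> sup x i")
      case True
      with Jirr_le_sup[OF j] xj have "j \<le> i"
        by blast
      with maximal i(1) have "j = i"
        by blast
      with \<open>j \<le> y\<close> i(2) show False by simp
    next
      case False
      then have "x = sup x i"
        using xmax[of "sup x i"] by simp
      then have "i \<le> x"
        by (metis sup.cobounded2)
      with i(2) y(1) show False by simp
    qed
  qed
  with xj show ?thesis by blast
qed

text \<open>Every element is above \<open>j\<close> or below \<open>c\<close>, so a maximal chain avoiding \<open>j\<close> jumps over it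
  in a single covering step.\<close>
lemma max_chain_step_across_Jirr:
  fixes C :: "'a::{finite,distrib_lattice,bounded_lattice} set"
  assumes C: "max_chain C" and c: "coatom c" and j: "j \<in> Jirr" "\<not> j \<le> c" "j \<notin> C"
  shows "\<exists>a b. a \<in> C \<and> b \<in> C \<and> covers a b \<and> a \<le> c \<and> j < b \<and> (\<forall>z\<in>C. z \<le> a \<or> b \<le> z)"
proof -
  have "is_chain C"
    using C unfolding max_chain_def by blast
  have "is_chain {x\<in>C. x \<le> c}" "{x\<in>C. x \<le> c} \<noteq> {}"
    using is_chain_subset[OF \<open>is_chain C\<close>] bot_mem_max_chain[OF C] by auto
  then obtain a where a: "a \<in> C" "a \<le> c" and a_max: "\<forall>x\<in>C. x \<le> c \<longrightarrow> x \<le> a"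
    using finite_chain_has_greatest by force
  have "is_chain {x\<in>C. j \<le> x}" "{x\<in>C. j \<le> x} \<noteq> {}"
    using is_chain_subset[OF \<open>is_chain C\<close>] top_mem_max_chain[OF C] by auto
  then obtain b where b: "b \<in> C" "j \<le> b" and b_min: "\<forall>x\<in>C. j \<le> x \<longrightarrow> b \<le> x"
    using finite_chain_has_least by force
  have "j < b"
    using b j(3) by (auto simp: less_le)
  have split: "\<forall>z\<in>C. z \<le> a \<or> b \<le> z"
    using Jirr_le_or_le_coatom[OF j(1) c j(2)] a_max b_min by blast
  have "\<not> b \<le> a"
    using a(2) b(2) j(2) order_trans by blast
  then have "a < b"
    using max_chain_comparable[OF C a(1) b(1)] by (auto simp: less_le)
  have "covers a b"
    by (rule covers_if_consecutive_in_max_chain[OF C a(1) b(1) \<open>a < b\<close>])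
      (use split in \<open>auto simp: less_le_not_le\<close>)
  with a b \<open>j < b\<close> split show ?thesis
    by blast
qed

lemma maximal_Jirr_two_coatoms:
  fixes cl cr ml mr :: "'a::{finite,distrib_lattice,bounded_lattice}"
  assumes coatoms: "\<And>c. coatom c \<longleftrightarrow> c = cl \<or> c = cr"
    and ml: "ml \<in> Jirr" "\<not> ml \<le> cr" and mr: "mr \<in> Jirr" "\<not> mr \<le> cl"
  shows "{x \<in> Jirr. \<forall>y \<in> Jirr. x \<le> y \<longrightarrow> x = y} = {ml, mr}"
proof (intro set_eqI iffI)
  fix j :: 'a
  assume "j \<in> {x \<in> Jirr. \<forall>y \<in> Jirr. x \<le> y \<longrightarrow> x = y}"
  then have j: "j \<in> Jirr" "\<forall>y \<in> Jirr. j \<le> y \<longrightarrow> j = y"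
    by simp_all
  then obtain c where c: "coatom c" "\<not> j \<le> c"
    using maximal_Jirr_not_le_some_coatom by blast
  then consider "c = cl" | "c = cr"
    using coatoms by blast
  then show "j \<in> {ml, mr}"
  proof cases
    case 1
    with Jirr_not_le_coatom_unique[OF c(1) j(1) mr(1)] c(2) mr(2) show ?thesis by simp
  next
    case 2
    with Jirr_not_le_coatom_unique[OF c(1) j(1) ml(1)] c(2) ml(2) show ?thesis by simp
  qed
next
  fix j :: 'a
  have "coatom cl" "coatom cr"
    using coatoms by blast+
  assume "j \<in> {ml, mr}"
  then show "j \<in> {x \<in> Jirr. \<forall>y \<in> Jirr. x \<le> y \<longrightarrow> x = y}"
    using Jirr_not_le_coatom_maximal[OF \<open>coatom cr\<close> ml]
      Jirr_not_le_coatom_maximal[OF \<open>coatom cl\<close> mr] ml(1) mr(1) by auto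
qed

lemma Jirr_not_le_inf_coatoms:
  fixes cl cr ml mr :: "'a::{distrib_lattice,bounded_lattice}"
  assumes "coatom cl" "coatom cr"
    and ml: "ml \<in> Jirr" "\<not> ml \<le> cr" and mr: "mr \<in> Jirr" "\<not> mr \<le> cl"
  shows "Jirr - {y. y \<le> inf cl cr} = {ml, mr}"
proof (intro set_eqI iffI)
  fix j
  assume "j \<in> Jirr - {y. y \<le> inf cl cr}"
  then have "j \<in> Jirr" "\<not> j \<le> cl \<or> \<not> j \<le> cr"
    by simp_all
  then show "j \<in> {ml, mr}"
    using Jirr_not_le_coatom_unique[OF assms(1) _ mr(1) _ mr(2), of j]
      Jirr_not_le_coatom_unique[OF assms(2) _ ml(1) _ ml(2), of j] by blast
next
  fix j
  assume "j \<in> {ml, mr}"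
  then show "j \<in> Jirr - {y. y \<le> inf cl cr}"
    using ml mr by auto
qed

lemma inf_coatoms_le_Jirr_imp_eq:
  fixes cl cr m :: "'a::{finite,distrib_lattice,bounded_lattice}"
  assumes cl: "coatom cl" and cr: "coatom cr" "cl \<noteq> cr"
    and m: "m \<in> Jirr" "\<not> m \<le> cr" and le: "inf cl cr \<le> m"
  shows "m = cl"
proof (rule antisym)
  show "m \<le> cl"
    using Jirr_le_other_coatom[OF cr(1) cl cr(2)[symmetric] m] .
  show "cl \<le> m"
  proof (rule ccontr)
    assume "\<not> cl \<le> m"
    then obtain j where j: "j \<in> Jirr" "j \<le> cl" "\<not> j \<le> m"
      using ex_Jirr_le_not_le by meson
    have "j \<le> cr"
    proof (rule ccontr)
      assume "\<not> j \<le> cr"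
      with Jirr_not_le_coatom_unique[OF cr(1) j(1) m(1) _ m(2)] have "j = m" .
      with j(3) show False by simp
    qed
    with j(2) have "j \<le> inf cl cr"
      by simp
    with j(3) le show False
      using order_trans by blast
  qed
qed

section \<open>Segments and the mirror image\<close>

lemma closed_segment_coordinates:
  fixes p q r :: "real \<times> real"
  assumes "r \<in> closed_segment p q"
  obtains u where "0 \<le> u" "u \<le> 1"
    "fst r = fst p + u * (fst q - fst p)" "snd r = snd p + u * (snd q - snd p)"
proof -
  from assms obtain u where u: "0 \<le> u" "u \<le> 1" and r: "r = (1 - u) *\<^sub>R p + u *\<^sub>R q"
    by (auto simp: closed_segment_def)
  have "fst r = (1 - u) * fst p + u * fst q" "snd r = (1 - u) * snd p + u * snd q"
    unfolding r by simp_all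
  with u show ?thesis
    by (intro that[of u]) (simp_all add: algebra_simps)
qed

lemma closed_segment_snd_between:
  fixes p q r :: "real \<times> real"
  assumes "r \<in> closed_segment p q" "snd p \<le> snd q"
  shows "snd p \<le> snd r \<and> snd r \<le> snd q"
proof -
  obtain u where u: "0 \<le> u" "u \<le> 1" and r: "snd r = snd p + u * (snd q - snd p)"
    using closed_segment_coordinates[OF assms(1)] by blast
  have "0 \<le> u * (snd q - snd p)" "u * (snd q - snd p) \<le> snd q - snd p"
    using u assms(2) by (simp_all add: mult_left_le_one_le)
  with r show ?thesis
    by linarith
qed

lemma closed_segment_fst_eq:
  fixes p q r :: "real \<times> real"
  assumes "r \<in> closed_segment p q" "snd p < snd q"
  shows "fst r = fst p + (snd r - snd p) / (snd q - snd p) * (fst q - fst p)"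
proof -
  obtain u where "fst r = fst p + u * (fst q - fst p)" "snd r = snd p + u * (snd q - snd p)"
    using closed_segment_coordinates[OF assms(1)] by blast
  with assms(2) show ?thesis
    by simp
qed

lemma closed_segment_eq_if_snd_eq:
  fixes p q r r' :: "real \<times> real"
  assumes "r \<in> closed_segment p q" "r' \<in> closed_segment p q" "snd r = snd r'" "snd p < snd q"
  shows "r = r'"
  using closed_segment_fst_eq[OF assms(1,4)] closed_segment_fst_eq[OF assms(2,4)] assms(3)
  by (simp add: prod_eq_iff)

lemma closed_segment_point_at_height:
  fixes p q :: "real \<times> real"
  assumes "snd p \<le> h" "h \<le> snd q" "snd p < snd q"
  shows "(fst p + (h - snd p) / (snd q - snd p) * (fst q - fst p), h) \<in> closed_segment p q"
proof -
  define u where "u = (h - snd p) / (snd q - snd p)"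
  have "0 \<le> u" "u \<le> 1"
    using assms unfolding u_def by (auto simp: field_simps)
  moreover have "(fst p + u * (fst q - fst p), h) = (1 - u) *\<^sub>R p + u *\<^sub>R q"
  proof -
    have "u * (snd q - snd p) = h - snd p"
      using assms(3) unfolding u_def by simp
    then show ?thesis
      by (simp add: prod_eq_iff algebra_simps)
  qed
  ultimately show ?thesis
    unfolding closed_segment_def u_def[symmetric] by blast
qed

lemma mem_chain_path_iff:
  "p \<in> chain_path pos C \<longleftrightarrow> (\<exists>a b. a \<in> C \<and> b \<in> C \<and> covers a b \<and> p \<in> closed_segment (pos a) (pos b))"
  unfolding chain_path_def by blast

definition mirror :: "real \<times> real \<Rightarrow> real \<times> real" where
  "mirror p = (- fst p, snd p)"

lemma mirror_mirror [simp]: "mirror (mirror p) = p"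
  and fst_mirror [simp]: "fst (mirror p) = - fst p"
  and snd_mirror [simp]: "snd (mirror p) = snd p"
  by (simp_all add: mirror_def)

lemma mem_closed_segment_mirror:
  "r \<in> closed_segment (mirror p) (mirror q) \<longleftrightarrow> mirror r \<in> closed_segment p q"
proof -
  have "linear mirror"
    by (rule linearI) (auto simp: mirror_def prod_eq_iff)
  then have "closed_segment (mirror p) (mirror q) = mirror ` closed_segment p q"
    by (simp add: closed_segment_linear_image)
  then show ?thesis
    by (metis image_iff mirror_mirror)
qed

lemma planar_diagram_mirror:
  assumes "planar_diagram pos"
  shows "planar_diagram (\<lambda>x. mirror (pos x))"
  unfolding planar_diagram_def
proof (intro conjI allI impI subsetI)
  show "inj (\<lambda>x. mirror (pos x))"
    using assms unfolding planar_diagram_def inj_def by (metis mirror_mirror)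
  show "snd (mirror (pos a)) < snd (mirror (pos b))" if "covers a b" for a b
    using assms that unfolding planar_diagram_def by simp
  fix a b c d r
  assume edges: "covers a b \<and> covers c d \<and> (a, b) \<noteq> (c, d)"
    and "r \<in> closed_segment (mirror (pos a)) (mirror (pos b)) \<inter>
      closed_segment (mirror (pos c)) (mirror (pos d))"
  then have "mirror r \<in> closed_segment (pos a) (pos b) \<inter> closed_segment (pos c) (pos d)"
    by (simp add: mem_closed_segment_mirror)
  with edges have "mirror r \<in> {pos a, pos b} \<inter> {pos c, pos d}"
    using assms unfolding planar_diagram_def by blast
  then show "r \<in> {mirror (pos a), mirror (pos b)} \<inter> {mirror (pos c), mirror (pos d)}"
    by (metis IntD1 IntD2 IntI insertCI insertE mirror_mirror singletonD)
qed

lemma chain_path_mirror: "chain_path (\<lambda>x. mirror (pos x)) C = mirror ` chain_path pos C"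
proof -
  have mem: "p \<in> chain_path (\<lambda>x. mirror (pos x)) C \<longleftrightarrow> mirror p \<in> chain_path pos C" for p
    unfolding mem_chain_path_iff by (simp add: mem_closed_segment_mirror)
  show ?thesis
  proof (intro set_eqI iffI)
    fix p
    assume "p \<in> chain_path (\<lambda>x. mirror (pos x)) C"
    then show "p \<in> mirror ` chain_path pos C"
      unfolding mem by (metis image_eqI mirror_mirror)
  qed (auto simp: mem)
qed

lemma LBound_mirror: "LBound (\<lambda>x. mirror (pos x)) = RBound pos"
proof -
  have "(- fst (pos x) - t, snd (pos x)) = mirror (fst (pos x) + t, snd (pos x))" for x t
    by (simp add: mirror_def)
  then show ?thesis
    unfolding LBound_def RBound_def by (simp add: mem_closed_segment_mirror)
qed

lemma ljsp_mirror: "ljsp (\<lambda>x. mirror (pos x)) = rjsp pos"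
  unfolding ljsp_def rjsp_def LBound_mirror ..

definition right_of :: "('a::order \<Rightarrow> real \<times> real) \<Rightarrow> 'a \<Rightarrow> 'a \<Rightarrow> bool" where
  "right_of pos x y \<longleftrightarrow> \<not> x \<le> y \<and> \<not> y \<le> x \<and>
     (\<exists>C. max_chain C \<and> y \<in> C \<and>
        (\<exists>p \<in> chain_path pos C. snd p = snd (pos x) \<and> fst p < fst (pos x)))"

lemma left_of_mirror: "left_of (\<lambda>x. mirror (pos x)) x y \<longleftrightarrow> right_of pos x y"
  unfolding left_of_def right_of_def chain_path_mirror by auto

section \<open>Drawings of maximal chains\<close>

text \<open>The abscissa of the drawing of a maximal chain at height \<open>h\<close>; it is meaningful for
  heights between those of \<open>bot\<close> and \<open>top\<close>, where the drawing is the graph of a function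
  of the height.\<close>
definition chain_x :: "('a::order \<Rightarrow> real \<times> real) \<Rightarrow> 'a set \<Rightarrow> real \<Rightarrow> real" where
  "chain_x pos C h = fst (SOME p. p \<in> chain_path pos C \<and> snd p = h)"

locale planar_lattice =
  fixes pos :: "'a::{finite,bounded_lattice} \<Rightarrow> real \<times> real"
  assumes planar: "planar_diagram pos" and nontrivial: "(bot::'a) \<noteq> top"
begin

abbreviation height :: "'a \<Rightarrow> real" where
  "height x \<equiv> snd (pos x)"

lemma height_less_if_covers: "covers a b \<Longrightarrow> height a < height b"
  using planar unfolding planar_diagram_def by blast

lemma pos_inject: "pos a = pos b \<longleftrightarrow> a = b"
  using planar unfolding planar_diagram_def inj_def by blast

lemma edges_meet_at_common_ends:
  assumes "covers a b" "covers c d" "(a, b) \<noteq> (c, d)"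
    "p \<in> closed_segment (pos a) (pos b)" "p \<in> closed_segment (pos c) (pos d)"
  shows "p \<in> {pos a, pos b} \<inter> {pos c, pos d}"
  using planar assms unfolding planar_diagram_def by blast

lemma height_less: "x < y \<Longrightarrow> height x < height y"
  by (rule less_if_covers_less[OF height_less_if_covers])

lemma height_le: "x \<le> y \<Longrightarrow> height x \<le> height y"
  using height_less by (metis order.order_iff_strict order_refl)

lemma height_bot_le: "height bot \<le> height x"
  and height_le_top: "height x \<le> height top"
  by (simp_all add: height_le)

lemma less_if_height_less_in_max_chain:
  assumes "max_chain C" "x \<in> C" "y \<in> C" "height x < height y"
  shows "x < y"
  using max_chain_comparable[OF assms(1-3)] assms(4) height_le by (metis leD order.order_iff_strict)

lemma height_on_edge:
  assumes "p \<in> closed_segment (pos a) (pos b)" "covers a b"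
  shows "height a \<le> snd p \<and> snd p \<le> height b"
  using closed_segment_snd_between[OF assms(1)] height_less_if_covers[OF assms(2)] by simp

text \<open>Two edges of a maximal chain can only meet at heights where they share a vertex, so the
  drawing of a maximal chain meets each horizontal line at most once.\<close>
lemma chain_path_unique_at_height:
  assumes C: "max_chain C" and "p \<in> chain_path pos C" "q \<in> chain_path pos C" "snd p = snd q"
  shows "p = q"
proof -
  have ordered: "p = q"
    if "a \<in> C" "b \<in> C" "covers a b" "p \<in> closed_segment (pos a) (pos b)"
      "c \<in> C" "d \<in> C" "covers c d" "q \<in> closed_segment (pos c) (pos d)" "snd p = snd q" "a < c"
    for a b c d p q
  proof -
    have "b \<le> c"
      using max_chain_comparable[OF C that(2,5)] that(3,10) unfolding covers_def by auto
    then have "height b \<le> height c"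
      by (rule height_le)
    with that height_on_edge[OF that(4,3)] height_on_edge[OF that(8,7)]
    have "snd p = height b" "snd q = height c" "height b = height c"
      by auto
    then have "b = c"
      using \<open>b \<le> c\<close> height_less by (metis order.order_iff_strict order.irrefl)
    moreover have "p = pos b"
      using closed_segment_eq_if_snd_eq[OF that(4) ends_in_segment(2)]
        \<open>snd p = height b\<close> height_less_if_covers[OF that(3)] by simp
    moreover have "q = pos c"
      using closed_segment_eq_if_snd_eq[OF that(8) ends_in_segment(1)]
        \<open>snd q = height c\<close> height_less_if_covers[OF that(7)] by simp
    ultimately show ?thesis by simp
  qed
  obtain a b where ab: "a \<in> C" "b \<in> C" "covers a b" "p \<in> closed_segment (pos a) (pos b)"
    using assms(2) mem_chain_path_iff by metis
  obtain c d where cd: "c \<in> C" "d \<in> C" "covers c d" "q \<in> closed_segment (pos c) (pos d)"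
    using assms(3) mem_chain_path_iff by metis
  consider "a < c" | "c < a" | "a = c"
    using max_chain_comparable[OF C ab(1) cd(1)] by (auto simp: order.order_iff_strict)
  then show ?thesis
  proof cases
    case 1
    with ordered[OF ab cd assms(4)] show ?thesis .
  next
    case 2
    with ordered[OF cd ab] assms(4) show ?thesis by simp
  next
    case 3
    then have "b = d"
      using max_chain_comparable[OF C ab(2) cd(2)] ab(3) cd(3) unfolding covers_def
      by (metis order.order_iff_strict)
    with 3 show ?thesis
      using closed_segment_eq_if_snd_eq[OF ab(4)] cd(4) assms(4) height_less_if_covers[OF ab(3)]
      by simp
  qed
qed

lemma max_chain_edge_at_height:
  assumes C: "max_chain C" and h: "height bot \<le> h" "h \<le> height top"
  shows "\<exists>a b. a \<in> C \<and> b \<in> C \<and> covers a b \<and> height a \<le> h \<and> h \<le> height b"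
proof -
  have "is_chain {x\<in>C. height x \<le> h}" "{x\<in>C. height x \<le> h} \<noteq> {}"
    using C bot_mem_max_chain[OF C] h(1) unfolding max_chain_def is_chain_def by auto
  then obtain a where a: "a \<in> C" "height a \<le> h" and a_max: "\<forall>x\<in>C. height x \<le> h \<longrightarrow> x \<le> a"
    using finite_chain_has_greatest by force
  show ?thesis
  proof (cases "a = top")
    case True
    have "\<exists>x\<in>C. x < top"
      using bot_mem_max_chain[OF C] nontrivial top.not_eq_extremum by blast
    then obtain a' where "a' \<in> C" "covers a' top"
      using max_chain_ex_lower_cover[OF C top_mem_max_chain[OF C]] by blast
    moreover have "height a' \<le> h"
      using a True height_le_top by (meson order_trans)
    ultimately show ?thesis
      using top_mem_max_chain[OF C] h(2) by blast
  next
    case False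
    then have "\<exists>x\<in>C. a < x"
      using top_mem_max_chain[OF C] top.not_eq_extremum by blast
    then obtain b where b: "b \<in> C" "covers a b"
      using max_chain_ex_upper_cover[OF C a(1)] by blast
    have "\<not> height b \<le> h"
      using a_max b unfolding covers_def by (meson leD)
    with a b show ?thesis by force
  qed
qed

lemma chain_x_eq:
  assumes "max_chain C" "p \<in> chain_path pos C"
  shows "chain_x pos C (snd p) = fst p"
proof -
  have "(SOME q. q \<in> chain_path pos C \<and> snd q = snd p) \<in> chain_path pos C \<and>
      snd (SOME q. q \<in> chain_path pos C \<and> snd q = snd p) = snd p"
    by (rule someI_ex) (use assms(2) in blast)
  then have "(SOME q. q \<in> chain_path pos C \<and> snd q = snd p) = p"
    using chain_path_unique_at_height assms by blast
  then show ?thesis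
    unfolding chain_x_def by simp
qed

lemma chain_x_on_edge:
  assumes "max_chain C" "a \<in> C" "b \<in> C" "covers a b" "height a \<le> h" "h \<le> height b"
  shows "chain_x pos C h =
    fst (pos a) + (h - height a) / (height b - height a) * (fst (pos b) - fst (pos a))"
proof -
  have "(fst (pos a) + (h - height a) / (height b - height a) * (fst (pos b) - fst (pos a)), h)
     \<in> closed_segment (pos a) (pos b)"
    by (rule closed_segment_point_at_height[OF assms(5,6) height_less_if_covers[OF assms(4)]])
  then have "(fst (pos a) + (h - height a) / (height b - height a) * (fst (pos b) - fst (pos a)), h)
     \<in> chain_path pos C"
    unfolding mem_chain_path_iff using assms(2-4) by blast
  from chain_x_eq[OF assms(1) this] show ?thesis by simp
qed

lemma chain_x_mem:
  assumes C: "max_chain C" and "height bot \<le> h" "h \<le> height top"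
  shows "(chain_x pos C h, h) \<in> chain_path pos C"
proof -
  obtain a b where ab: "a \<in> C" "b \<in> C" "covers a b" "height a \<le> h" "h \<le> height b"
    using max_chain_edge_at_height[OF assms] by blast
  have "(fst (pos a) + (h - height a) / (height b - height a) * (fst (pos b) - fst (pos a)), h)
     \<in> closed_segment (pos a) (pos b)"
    by (rule closed_segment_point_at_height[OF ab(4,5) height_less_if_covers[OF ab(3)]])
  with ab show ?thesis
    unfolding mem_chain_path_iff chain_x_on_edge[OF C ab] by blast
qed

lemma chain_x_mem_at_height: "max_chain C \<Longrightarrow> (chain_x pos C (height x), height x) \<in> chain_path pos C"
  using chain_x_mem height_bot_le height_le_top by blast

lemma ex_covers_incident: "\<exists>w. covers (x::'a) w \<or> covers w x"
proof (cases "x = top")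
  case True
  then have "bot < x"
    using nontrivial top.not_eq_extremum by blast
  then show ?thesis
    using ex_cover_below by blast
next
  case False
  then have "x < top"
    using top.not_eq_extremum by blast
  then show ?thesis
    using ex_cover_above by blast
qed

text \<open>Planarity forbids a vertex in the interior of an edge, so the drawing of a maximal chain
  passes through exactly the vertices of the chain.\<close>
lemma pos_mem_chain_path_iff:
  assumes C: "max_chain C"
  shows "pos x \<in> chain_path pos C \<longleftrightarrow> x \<in> C"
proof
  assume "pos x \<in> chain_path pos C"
  then obtain a b where ab: "a \<in> C" "b \<in> C" "covers a b" "pos x \<in> closed_segment (pos a) (pos b)"
    using mem_chain_path_iff by metis
  obtain w where "covers x w \<or> covers w x"
    using ex_covers_incident by blast
  then have "(x, w) = (a, b) \<or> (w, x) = (a, b) \<or> pos x \<in> {pos a, pos b}"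
    using edges_meet_at_common_ends[OF _ ab(3) _ _ ab(4)] ends_in_segment by blast
  with ab show "x \<in> C"
    using pos_inject by auto
next
  assume "x \<in> C"
  show "pos x \<in> chain_path pos C"
  proof (cases "x = top")
    case True
    have "\<exists>y\<in>C. y < top"
      using bot_mem_max_chain[OF C] nontrivial top.not_eq_extremum by blast
    then obtain a where "a \<in> C" "covers a top"
      using max_chain_ex_lower_cover[OF C top_mem_max_chain[OF C]] by blast
    with True show ?thesis
      unfolding mem_chain_path_iff using top_mem_max_chain[OF C] by (metis ends_in_segment(2))
  next
    case False
    then have "\<exists>y\<in>C. x < y"
      using top_mem_max_chain[OF C] top.not_eq_extremum by blast
    then obtain b where "b \<in> C" "covers x b"
      using max_chain_ex_upper_cover[OF C \<open>x \<in> C\<close>] by blast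
    with \<open>x \<in> C\<close> show ?thesis
      unfolding mem_chain_path_iff by (metis ends_in_segment(1))
  qed
qed

lemma chain_x_vertex: "max_chain C \<Longrightarrow> x \<in> C \<Longrightarrow> chain_x pos C (height x) = fst (pos x)"
  using chain_x_eq pos_mem_chain_path_iff by blast

lemma chain_x_ne:
  assumes C: "max_chain C" and "x \<notin> C"
  shows "chain_x pos C (height x) \<noteq> fst (pos x)"
proof
  assume "chain_x pos C (height x) = fst (pos x)"
  then have "pos x = (chain_x pos C (height x), height x)"
    by (simp add: prod_eq_iff)
  with chain_x_mem_at_height[OF C, of x] assms show False
    using pos_mem_chain_path_iff[OF C] by simp
qed

lemma continuous_on_chain_x:
  assumes C: "max_chain C"
  shows "continuous_on {height bot..height top} (chain_x pos C)"
proof -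
  let ?E = "{(a, b). a \<in> C \<and> b \<in> C \<and> covers a b}"
  let ?I = "\<lambda>(a, b). {height a..height b}"
  have "continuous_on (\<Union>e\<in>?E. ?I e) (chain_x pos C)"
  proof (rule continuous_on_closed_Union)
    fix e assume "e \<in> ?E"
    then obtain a b where e: "e = (a, b)" "a \<in> C" "b \<in> C" "covers a b"
      by auto
    show "closed (?I e)"
      using e by simp
    have "continuous_on (?I e)
        (\<lambda>h. fst (pos a) + (h - height a) / (height b - height a) * (fst (pos b) - fst (pos a)))"
      using height_less_if_covers[OF e(4)] by (intro continuous_intros) auto
    moreover have "\<And>h. h \<in> ?I e \<Longrightarrow> chain_x pos C h =
        fst (pos a) + (h - height a) / (height b - height a) * (fst (pos b) - fst (pos a))"
      using chain_x_on_edge[OF C e(2-4)] e(1) by auto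
    ultimately show "continuous_on (?I e) (chain_x pos C)"
      using continuous_on_cong by (metis (no_types, lifting))
  qed simp
  moreover have "{height bot..height top} \<subseteq> (\<Union>e\<in>?E. ?I e)"
    using max_chain_edge_at_height[OF C] by fastforce
  ultimately show ?thesis
    using continuous_on_subset by blast
qed

text \<open>By planarity, drawings of two maximal chains can only meet at a common vertex or on a
  common edge, whose lower end is then a common vertex.\<close>
lemma chain_paths_meet_above_common_vertex:
  assumes C: "max_chain C" and D: "max_chain D"
    and p: "p \<in> chain_path pos C" "p \<in> chain_path pos D"
  shows "\<exists>z\<in>C \<inter> D. height z \<le> snd p \<and>
    (\<forall>h. height z \<le> h \<and> h \<le> snd p \<longrightarrow> chain_x pos C h = chain_x pos D h)"
proof -
  obtain a b c d where ab: "a \<in> C" "b \<in> C" "covers a b" "p \<in> closed_segment (pos a) (pos b)"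
    and cd: "c \<in> D" "d \<in> D" "covers c d" "p \<in> closed_segment (pos c) (pos d)"
    using p unfolding mem_chain_path_iff by blast
  show ?thesis
  proof (cases "(a, b) = (c, d)")
    case True
    with cd have "a \<in> D" "b \<in> D"
      by simp_all
    moreover have "height a \<le> snd p" "snd p \<le> height b"
      using height_on_edge[OF ab(4,3)] by simp_all
    moreover have "chain_x pos C h = chain_x pos D h" if "height a \<le> h" "h \<le> snd p" for h
      using chain_x_on_edge[OF C ab(1-3)] chain_x_on_edge[OF D \<open>a \<in> D\<close> \<open>b \<in> D\<close> ab(3)] that
        \<open>snd p \<le> height b\<close> by simp
    ultimately show ?thesis
      using ab(1) by blast
  next
    case False
    then obtain z where "z \<in> {a, b}" "z \<in> {c, d}" "p = pos z"
      using edges_meet_at_common_ends[OF ab(3) cd(3) False ab(4) cd(4)] pos_inject by auto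
    with ab(1,2) cd(1,2) have "z \<in> C \<inter> D" "height z = snd p"
      by auto
    moreover have "chain_x pos C (height z) = chain_x pos D (height z)"
      using chain_x_vertex[OF C] chain_x_vertex[OF D] \<open>z \<in> C \<inter> D\<close> by simp
    ultimately show ?thesis
      by (intro bexI[of _ z]) (auto dest: order.antisym)
  qed
qed

lemma max_chains_cross:
  assumes C: "max_chain C" and D: "max_chain D" and le: "height u \<le> height v"
    and swap: "(chain_x pos C (height u) - chain_x pos D (height u)) *
      (chain_x pos C (height v) - chain_x pos D (height v)) < 0"
  shows "\<exists>z\<in>C \<inter> D. height u < height z \<and> height z < height v"
proof -
  let ?g = "\<lambda>h. chain_x pos C h - chain_x pos D h"
  have "continuous_on {height u..height v} ?g"
    using continuous_on_diff[OF continuous_on_chain_x[OF C] continuous_on_chain_x[OF D]]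
    by (rule continuous_on_subset) (auto intro: height_bot_le height_le_top order_trans)
  moreover have "?g (height u) \<le> 0 \<and> 0 \<le> ?g (height v) \<or> ?g (height v) \<le> 0 \<and> 0 \<le> ?g (height u)"
    using swap by (auto simp: mult_less_0_iff)
  ultimately obtain s where s: "height u \<le> s" "s \<le> height v" "?g s = 0"
    using IVT'[of ?g "height u" 0 "height v"] IVT2'[of ?g "height v" 0 "height u"] le by blast
  have "s < height v"
    using s swap by (auto simp: order.order_iff_strict)
  have "height bot \<le> s" "s \<le> height top"
    using s height_bot_le height_le_top by (meson order_trans)+
  then have "(chain_x pos C s, s) \<in> chain_path pos C" "(chain_x pos D s, s) \<in> chain_path pos D"
    using chain_x_mem[OF C] chain_x_mem[OF D] by simp_all
  moreover have "chain_x pos D s = chain_x pos C s"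
    using s(3) by simp
  ultimately have "(chain_x pos C s, s) \<in> chain_path pos C" "(chain_x pos C s, s) \<in> chain_path pos D"
    by simp_all
  then obtain z where z: "z \<in> C \<inter> D" "height z \<le> s"
    and agree: "\<And>h. height z \<le> h \<Longrightarrow> h \<le> s \<Longrightarrow> ?g h = 0"
    using chain_paths_meet_above_common_vertex[OF C D] by force
  have "height u < height z"
  proof (rule ccontr)
    assume "\<not> height u < height z"
    with agree s(1) have "?g (height u) = 0"
      by simp
    with swap show False
      by simp
  qed
  with z \<open>s < height v\<close> show ?thesis
    by force
qed

lemma chain_x_eq_below:
  assumes C: "max_chain C" and D: "max_chain D" and "a \<in> C" and below: "{x\<in>C. x \<le> a} \<subseteq> D"
    and h: "height bot \<le> h" "h \<le> height a"
  shows "chain_x pos C h = chain_x pos D h"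
proof -
  have "h \<le> height top"
    using h(2) height_le_top order_trans by blast
  then obtain u v where uv: "u \<in> C" "v \<in> C" "covers u v" "height u \<le> h" "h \<le> height v"
    using max_chain_edge_at_height[OF C h(1)] by blast
  show ?thesis
  proof (cases "v \<le> a")
    case True
    then have "u \<in> D" "v \<in> D"
      using below uv(1-3) unfolding covers_def by auto
    with uv show ?thesis
      using chain_x_on_edge[OF C uv] chain_x_on_edge[OF D] by simp
  next
    case False
    then have "a < v"
      using max_chain_comparable[OF C \<open>a \<in> C\<close> uv(2)] by auto
    moreover have "\<not> a < u"
      using height_less h(2) uv(4) by fastforce
    ultimately have "u = a"
      using max_chain_comparable[OF C \<open>a \<in> C\<close> uv(1)] uv(3)
      unfolding covers_def by (auto simp: order.order_iff_strict)
    then have "h = height a"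
      using h(2) uv(4) by simp
    moreover have "a \<in> D"
      using below \<open>a \<in> C\<close> by blast
    ultimately show ?thesis
      using chain_x_vertex[OF C \<open>a \<in> C\<close>] chain_x_vertex[OF D] by simp
  qed
qed

section \<open>Sides of maximal chains\<close>

text \<open>If two incomparable elements lay on the same side of each other's maximal chains, those
  chains would swap sides between their heights and hence meet in an element strictly
  between them.\<close>
lemma opposite_sides:
  assumes "\<not> x \<le> y" "\<not> y \<le> x"
    and "max_chain Cx" "x \<in> Cx" "max_chain Cy" "y \<in> Cy"
  shows "(fst (pos x) - chain_x pos Cy (height x)) * (fst (pos y) - chain_x pos Cx (height y)) < 0"
proof -
  have lower: "(fst (pos x) - chain_x pos Cy (height x)) * (fst (pos y) - chain_x pos Cx (height y)) < 0"
    if hyps: "\<not> x \<le> y" "\<not> y \<le> x" "max_chain Cx" "x \<in> Cx" "max_chain Cy" "y \<in> Cy"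
      and le: "height x \<le> height y"
    for x y Cx Cy
  proof (rule ccontr)
    let ?a = "fst (pos x) - chain_x pos Cy (height x)"
    let ?b = "fst (pos y) - chain_x pos Cx (height y)"
    assume "\<not> ?a * ?b < 0"
    moreover have "?a \<noteq> 0" "?b \<noteq> 0"
      using chain_x_ne hyps not_mem_max_chain_if_incomparable by (metis eq_iff_diff_eq_0)+
    ultimately have pos_prod: "0 < ?a * ?b"
      by (simp add: not_less order.order_iff_strict)
    have x: "chain_x pos Cx (height x) = fst (pos x)" and y: "chain_x pos Cy (height y) = fst (pos y)"
      using chain_x_vertex hyps by blast+
    have "(chain_x pos Cx (height x) - chain_x pos Cy (height x)) *
        (chain_x pos Cx (height y) - chain_x pos Cy (height y)) = - (?a * ?b)"
      using x y by (simp add: algebra_simps)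
    with pos_prod have "(chain_x pos Cx (height x) - chain_x pos Cy (height x)) *
        (chain_x pos Cx (height y) - chain_x pos Cy (height y)) < 0"
      by simp
    then obtain z where "z \<in> Cx" "z \<in> Cy" "height x < height z" "height z < height y"
      using max_chains_cross[OF hyps(3,5) le] by blast
    then have "x < z" "z < y"
      using less_if_height_less_in_max_chain hyps by blast+
    with hyps(1) show False by simp
  qed
  show ?thesis
  proof (cases "height x \<le> height y")
    case True
    with lower assms show ?thesis by blast
  next
    case False
    with lower[of y x Cy Cx] assms show ?thesis
      by (simp add: mult.commute)
  qed
qed

lemma side_independent_of_chain:
  assumes inc: "\<not> x \<le> y" "\<not> y \<le> x"
    and C: "max_chain C" "y \<in> C" and D: "max_chain D" "y \<in> D"
  shows "fst (pos x) < chain_x pos C (height x) \<longleftrightarrow> fst (pos x) < chain_x pos D (height x)"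
proof -
  obtain Cx where Cx: "max_chain Cx" "x \<in> Cx"
    using ex_max_chain_mem by blast
  from opposite_sides[OF inc Cx C] opposite_sides[OF inc Cx D] show ?thesis
    by (auto simp: mult_less_0_iff)
qed

lemma left_of_iff:
  assumes inc: "\<not> x \<le> y" "\<not> y \<le> x" and C: "max_chain C" "y \<in> C"
  shows "left_of pos x y \<longleftrightarrow> fst (pos x) < chain_x pos C (height x)"
proof
  assume "left_of pos x y"
  then obtain D p where D: "max_chain D" "y \<in> D" and p: "p \<in> chain_path pos D"
    "snd p = height x" "fst (pos x) < fst p"
    unfolding left_of_def by blast
  with chain_x_eq[OF D(1) p(1)] have "fst (pos x) < chain_x pos D (height x)"
    by simp
  with side_independent_of_chain[OF inc C D] show "fst (pos x) < chain_x pos C (height x)"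
    by simp
next
  assume "fst (pos x) < chain_x pos C (height x)"
  with inc C chain_x_mem_at_height[OF C(1), of x] show "left_of pos x y"
    unfolding left_of_def by (intro conjI exI[of _ C] bexI[of _ "(chain_x pos C (height x), height x)"]) simp_all
qed

lemma right_of_iff:
  assumes inc: "\<not> x \<le> y" "\<not> y \<le> x" and C: "max_chain C" "y \<in> C"
  shows "right_of pos x y \<longleftrightarrow> chain_x pos C (height x) < fst (pos x)"
proof
  assume "right_of pos x y"
  then obtain D p where D: "max_chain D" "y \<in> D" and p: "p \<in> chain_path pos D"
    "snd p = height x" "fst p < fst (pos x)"
    unfolding right_of_def by blast
  with chain_x_eq[OF D(1) p(1)] have "\<not> fst (pos x) < chain_x pos D (height x)"
    by simp
  with side_independent_of_chain[OF inc C D] chain_x_ne[OF C(1)]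
    not_mem_max_chain_if_incomparable[OF C(1,2) inc]
  show "chain_x pos C (height x) < fst (pos x)"
    by fastforce
next
  assume "chain_x pos C (height x) < fst (pos x)"
  with inc C chain_x_mem_at_height[OF C(1), of x] show "right_of pos x y"
    unfolding right_of_def by (intro conjI exI[of _ C] bexI[of _ "(chain_x pos C (height x), height x)"]) simp_all
qed

lemma left_of_or_right_of:
  assumes "\<not> x \<le> y" "\<not> y \<le> x"
  shows "left_of pos x y \<or> right_of pos x y"
proof -
  obtain C where C: "max_chain C" "y \<in> C"
    using ex_max_chain_mem by blast
  with chain_x_ne[OF C(1)] not_mem_max_chain_if_incomparable[OF C assms] show ?thesis
    using left_of_iff[OF assms C] right_of_iff[OF assms C] by fastforce
qed

lemma not_left_of_and_right_of: "left_of pos x y \<Longrightarrow> \<not> right_of pos x y"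
  using left_of_iff right_of_iff ex_max_chain_mem unfolding left_of_def by fastforce

lemma right_of_if_left_of:
  assumes "left_of pos x y"
  shows "right_of pos y x"
proof -
  have inc: "\<not> x \<le> y" "\<not> y \<le> x"
    using assms unfolding left_of_def by blast+
  obtain Cx Cy where Cx: "max_chain Cx" "x \<in> Cx" and Cy: "max_chain Cy" "y \<in> Cy"
    using ex_max_chain_mem by metis
  have "fst (pos x) < chain_x pos Cy (height x)"
    using assms left_of_iff[OF inc Cy] by blast
  with opposite_sides[OF inc Cx Cy] show ?thesis
    using right_of_iff[OF inc(2,1) Cx] by (auto simp: mult_less_0_iff)
qed

lemma left_of_if_right_of:
  assumes "right_of pos x y"
  shows "left_of pos y x"
proof -
  have inc: "\<not> x \<le> y" "\<not> y \<le> x"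
    using assms unfolding right_of_def by blast+
  obtain Cx Cy where Cx: "max_chain Cx" "x \<in> Cx" and Cy: "max_chain Cy" "y \<in> Cy"
    using ex_max_chain_mem by metis
  have "chain_x pos Cy (height x) < fst (pos x)"
    using assms right_of_iff[OF inc Cy] by blast
  with opposite_sides[OF inc Cx Cy] show ?thesis
    using left_of_iff[OF inc(2,1) Cx] by (auto simp: mult_less_0_iff)
qed

text \<open>A maximal chain through \<open>u\<close> and \<open>v\<close> has to cross \<open>C\<close> between them.\<close>
lemma max_chain_meets_between:
  assumes C: "max_chain C" and "u < v" "u \<notin> C" "v \<notin> C"
    and sides: "(fst (pos u) < chain_x pos C (height u)) \<noteq> (fst (pos v) < chain_x pos C (height v))"
  shows "\<exists>z\<in>C. u < z \<and> z < v"
proof -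
  obtain D where D: "max_chain D" "u \<in> D" "v \<in> D"
    using ex_max_chain_mem2 \<open>u < v\<close> less_imp_le by blast
  have "chain_x pos C (height u) \<noteq> fst (pos u)" "chain_x pos C (height v) \<noteq> fst (pos v)"
    using chain_x_ne C assms(3,4) by blast+
  with sides chain_x_vertex[OF D(1,2)] chain_x_vertex[OF D(1,3)]
  have "(chain_x pos C (height u) - chain_x pos D (height u)) *
      (chain_x pos C (height v) - chain_x pos D (height v)) < 0"
    by (auto simp: mult_less_0_iff)
  then obtain z where "z \<in> C" "z \<in> D" "height u < height z" "height z < height v"
    using max_chains_cross[OF C D(1) less_imp_le[OF height_less[OF \<open>u < v\<close>]]] by blast
  with D show ?thesis
    using less_if_height_less_in_max_chain by blast
qed

text \<open>Otherwise the chain would contain an element strictly between \<open>u\<close> and \<open>c\<close>, which is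
  neither below nor above \<open>c'\<close>.\<close>
lemma same_side_below_coatom:
  assumes C: "max_chain C" "c' \<in> C" and c: "coatom c" "coatom c'" "c \<noteq> c'"
    and u: "u \<le> c" "\<not> u \<le> c'"
  shows "fst (pos u) < chain_x pos C (height u) \<longleftrightarrow> fst (pos c) < chain_x pos C (height c)"
proof (cases "u = c")
  case False
  then have "u < c"
    using u(1) by simp
  have not_le: "\<not> c \<le> c'" "\<not> c' \<le> c"
    using coatom_not_le_coatom c by blast+
  then have "\<not> c' \<le> u"
    using u(1) order_trans by blast
  then have "u \<notin> C" "c \<notin> C"
    using not_mem_max_chain_if_incomparable[OF C] u(2) not_le by blast+
  show ?thesis
  proof (rule ccontr)
    assume "\<not> ?thesis"
    then obtain z where "z \<in> C" "u < z" "z < c"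
      using max_chain_meets_between[OF C(1) \<open>u < c\<close> \<open>u \<notin> C\<close> \<open>c \<notin> C\<close>] by blast
    with max_chain_comparable[OF C(1) _ C(2)] u(2) not_le(2) show False
      by (meson less_imp_le order_trans)
  qed
qed simp

lemma left_of_chain_through_right_coatom:
  assumes co: "coatom cl" "coatom cr" and L: "left_of pos cl cr"
    and D: "max_chain D" "cr \<in> D" and u: "u \<le> cl" "\<not> u \<le> cr"
  shows "fst (pos u) < chain_x pos D (height u)"
proof -
  have "cl \<noteq> cr" "\<not> cl \<le> cr" "\<not> cr \<le> cl"
    using L unfolding left_of_def by auto
  with same_side_below_coatom[OF D co \<open>cl \<noteq> cr\<close> u] left_of_iff[OF _ _ D] L show ?thesis
    by blast
qed

lemma le_middle_coatom:
  assumes co: "coatom c1" "coatom c2" "coatom c3" "c1 \<noteq> c2" "c3 \<noteq> c2"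
    and L: "left_of pos c1 c2" and R: "right_of pos c3 c2"
    and j: "j \<le> c1" "j \<le> c3"
  shows "j \<le> c2"
proof (rule ccontr)
  assume "\<not> j \<le> c2"
  obtain C where C: "max_chain C" "c2 \<in> C"
    using ex_max_chain_mem by blast
  have "fst (pos c1) < chain_x pos C (height c1)" "chain_x pos C (height c3) < fst (pos c3)"
    using L R left_of_iff[OF _ _ C] right_of_iff[OF _ _ C]
    unfolding left_of_def right_of_def by blast+
  with same_side_below_coatom[OF C co(1,2,4) j(1) \<open>\<not> j \<le> c2\<close>]
    same_side_below_coatom[OF C co(3,2,5) j(2) \<open>\<not> j \<le> c2\<close>] show False
    by linarith
qed

lemma step_lower_end_left_of_chain:
  assumes C: "max_chain C" and right: "chain_x pos C (height m) < fst (pos m)"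
    and step: "a \<in> C" "covers a b" "\<not> m \<le> a" "m < b" "\<forall>z\<in>C. z \<le> a \<or> b \<le> z"
    and am: "height a < height m"
    and E: "max_chain E" "m \<in> E"
  shows "fst (pos a) < chain_x pos E (height a)"
proof (rule ccontr)
  assume "\<not> ?thesis"
  moreover have "a \<notin> E"
  proof
    assume "a \<in> E"
    with max_chain_comparable[OF E(1) _ E(2)] step(3) have "a < m"
      by (auto simp: order.order_iff_strict)
    with step(2,4) show False
      unfolding covers_def by blast
  qed
  ultimately have "chain_x pos E (height a) < fst (pos a)"
    using chain_x_ne[OF E(1)] by fastforce
  with right chain_x_vertex[OF C step(1)] chain_x_vertex[OF E]
  have "(chain_x pos E (height a) - chain_x pos C (height a)) *
      (chain_x pos E (height m) - chain_x pos C (height m)) < 0"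
    by (simp add: mult_less_0_iff)
  then obtain z where "z \<in> C" "height a < height z" "height z < height m"
    using max_chains_cross[OF E(1) C less_imp_le[OF am]] by blast
  with step(4,5) show False
    using height_le height_less by (meson leD less_trans order.trans)
qed

lemma LBound_iff: "x \<in> LBound pos \<longleftrightarrow> (\<forall>C. max_chain C \<longrightarrow> fst (pos x) \<le> chain_x pos C (height x))"
proof
  assume x: "x \<in> LBound pos"
  show "\<forall>C. max_chain C \<longrightarrow> fst (pos x) \<le> chain_x pos C (height x)"
  proof (intro allI impI)
    fix C :: "'a set"
    assume C: "max_chain C"
    obtain a b where ab: "covers a b"
      "(chain_x pos C (height x), height x) \<in> closed_segment (pos a) (pos b)"
      using chain_x_mem_at_height[OF C] mem_chain_path_iff by metis
    from x ab(1) have "\<forall>t>0. (fst (pos x) - t, height x) \<notin> closed_segment (pos a) (pos b)"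
      unfolding LBound_def by blast
    from this[rule_format, of "fst (pos x) - chain_x pos C (height x)"] ab(2)
    show "fst (pos x) \<le> chain_x pos C (height x)"
      by force
  qed
next
  assume all: "\<forall>C. max_chain C \<longrightarrow> fst (pos x) \<le> chain_x pos C (height x)"
  show "x \<in> LBound pos"
  proof (rule ccontr)
    assume "x \<notin> LBound pos"
    then obtain a b t where ab: "covers a b" "t > 0"
      "(fst (pos x) - t, height x) \<in> closed_segment (pos a) (pos b)"
      unfolding LBound_def by blast
    obtain C where C: "max_chain C" "a \<in> C" "b \<in> C"
      using ex_max_chain_mem2 ab(1) unfolding covers_def by (meson less_imp_le)
    with ab have "(fst (pos x) - t, height x) \<in> chain_path pos C"
      unfolding mem_chain_path_iff by blast
    from chain_x_eq[OF C(1) this] all C(1) ab(2) show False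
      by force
  qed
qed

lemma LBound_comparable:
  assumes "x \<in> LBound pos" "y \<in> LBound pos"
  shows "x \<le> y \<or> y \<le> x"
proof (rule ccontr)
  assume "\<not> (x \<le> y \<or> y \<le> x)"
  then have inc: "\<not> x \<le> y" "\<not> y \<le> x"
    by simp_all
  have left: "left_of pos u v"
    if "u \<in> LBound pos" "\<not> u \<le> v" "\<not> v \<le> u" for u v
  proof -
    obtain C where C: "max_chain C" "v \<in> C"
      using ex_max_chain_mem by blast
    with that chain_x_ne[OF C(1)] not_mem_max_chain_if_incomparable[OF C] LBound_iff
    have "fst (pos u) < chain_x pos C (height u)"
      by (metis order.not_eq_order_implies_strict)
    with left_of_iff[OF that(2,3) C] show ?thesis
      by blast
  qed
  from left[OF assms(1) inc] left[OF assms(2) inc(2,1)] show False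
    using right_of_if_left_of not_left_of_and_right_of by blast
qed

end

section \<open>Planar distributive lattices\<close>

locale planar_distrib_lattice = planar_lattice pos
  for pos :: "'a::{finite,distrib_lattice,bounded_lattice} \<Rightarrow> real \<times> real"
begin

lemma not_right_of_if_left_of_coatom:
  assumes co: "coatom c1" "coatom c2" "coatom c3" "c1 \<noteq> c2" "c3 \<noteq> c2"
    and L: "left_of pos c1 c2"
  shows "\<not> right_of pos c3 c2"
proof
  assume R: "right_of pos c3 c2"
  obtain j where j: "j \<in> Jirr" "\<not> j \<le> c2"
    using ex_Jirr_not_le_coatom[OF co(2)] by blast
  with le_middle_coatom[OF co L R] Jirr_le_other_coatom[OF co(2,1) _ j]
    Jirr_le_other_coatom[OF co(2,3) _ j] co(4,5) show False
    by auto
qed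

lemma coatom_iff_left_or_right:
  assumes cl: "coatom cl" and cr: "coatom cr" and L: "left_of pos cl cr"
  shows "coatom c \<longleftrightarrow> c = cl \<or> c = cr"
proof
  assume c: "coatom c"
  show "c = cl \<or> c = cr"
  proof (rule ccontr)
    assume "\<not> (c = cl \<or> c = cr)"
    then have ne: "c \<noteq> cl" "c \<noteq> cr"
      by simp_all
    have "cl \<noteq> cr"
      using L unfolding left_of_def by auto
    have incomparable: "\<not> c \<le> c'" "\<not> c' \<le> c" if "c' = cl \<or> c' = cr" for c'
      using coatom_not_le_coatom c cl cr ne that by metis+
    consider "left_of pos c cl" | "left_of pos cl c" "left_of pos c cr" | "right_of pos c cr"
      using left_of_or_right_of left_of_if_right_of incomparable by metis
    then show False
      using not_right_of_if_left_of_coatom right_of_if_left_of cl cr c ne L \<open>cl \<noteq> cr\<close>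
      by cases metis+
  qed
qed (use cl cr in blast)

text \<open>The step \<open>a \<prec> b\<close> by which a maximal chain \<open>C\<close> passing to the left of \<open>m\<close> jumps over \<open>m\<close>
  cannot straddle the height of \<open>m\<close>: otherwise the chain \<open>D\<close> through \<open>cr\<close> that agrees with \<open>C\<close>
  up to \<open>a\<close>, and a chain \<open>E\<close> through \<open>m\<close> that agrees with \<open>C\<close> from \<open>b\<close> on, would cross strictly
  between \<open>a\<close> and \<open>b\<close>.\<close>
lemma height_le_lower_end_of_step:
  assumes cl: "coatom cl" and cr: "coatom cr" and L: "left_of pos cl cr" and m: "\<not> m \<le> cr"
    and C: "max_chain C" and right: "chain_x pos C (height m) < fst (pos m)"
    and step: "a \<in> C" "b \<in> C" "covers a b" "a \<le> cr" "m < b" "b \<noteq> top"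
      "\<forall>z\<in>C. z \<le> a \<or> b \<le> z"
    and D: "max_chain D" "cr \<in> D" "{z\<in>C. z \<le> a} \<subseteq> D"
  shows "height m \<le> height a"
proof (rule ccontr)
  assume "\<not> height m \<le> height a"
  then have am: "height a < height m"
    by simp
  have not_b_cr: "\<not> b \<le> cr"
    using step(5) m order.trans less_imp_le by blast
  have "b \<le> cl"
    using le_coatom_if_not_le_other[OF coatom_iff_left_or_right[OF cl cr L] step(6) not_b_cr] .
  with left_of_chain_through_right_coatom[OF cl cr L D(1,2) _ not_b_cr]
  have b_left: "fst (pos b) < chain_x pos D (height b)" .
  obtain E where E: "max_chain E" "m \<in> E" "{z\<in>C. b \<le> z} \<subseteq> E"
    using ex_max_chain_extending_above[OF C less_imp_le[OF step(5)]] by blast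
  have "\<not> m \<le> a"
    using step(4) m order_trans by blast
  with step_lower_end_left_of_chain[OF C right step(1,3) _ step(5,7) am E(1,2)]
  have a_left: "fst (pos a) < chain_x pos E (height a)" .
  have "a \<in> D" "b \<in> E"
    using D(3) E(3) step(1,2) by auto
  with a_left b_left chain_x_vertex[OF D(1)] chain_x_vertex[OF E(1)]
  have "(chain_x pos D (height a) - chain_x pos E (height a)) *
      (chain_x pos D (height b) - chain_x pos E (height b)) < 0"
    by (simp add: mult_less_0_iff)
  then obtain z where z: "z \<in> D" "z \<in> E" "height a < height z" "height z < height b"
    using max_chains_cross[OF D(1) E(1) less_imp_le[OF height_less_if_covers[OF step(3)]]]
    by blast
  have "z \<noteq> top"
    using z(4) height_le_top[of b] by auto
  then have "z \<le> cr"
    using max_chain_comparable[OF D(1) z(1) D(2)] coatom_le_cases[OF cr, of z] by auto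
  then have "\<not> m \<le> z" "z \<noteq> m"
    using m order_trans by blast+
  then have "z < m"
    using max_chain_comparable[OF E(1) z(2) E(2)] by (auto simp: order.order_iff_strict)
  then have "z < b"
    using step(5) by (rule less_trans)
  moreover have "a < z"
    using less_if_height_less_in_max_chain[OF D(1) \<open>a \<in> D\<close> z(1,3)] .
  ultimately show False
    using step(3) unfolding covers_def by blast
qed

lemma Jirr_not_le_right_coatom_mem_LBound:
  assumes cl: "coatom cl" and cr: "coatom cr" and L: "left_of pos cl cr"
    and m: "m \<in> Jirr" "\<not> m \<le> cr"
  shows "m \<in> LBound pos"
proof (rule ccontr)
  assume "m \<notin> LBound pos"
  then obtain C where C: "max_chain C" and right: "chain_x pos C (height m) < fst (pos m)"
    unfolding LBound_iff by force
  have "cl \<noteq> cr"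
    using L unfolding left_of_def by auto
  have not_right: "\<not> chain_x pos D (height m) < fst (pos m)" if "max_chain D" "cr \<in> D" for D
    using left_of_chain_through_right_coatom[OF cl cr L that Jirr_le_other_coatom[OF cr cl _ m]]
      \<open>cl \<noteq> cr\<close> m(2) by simp
  have "m \<notin> C"
    using chain_x_vertex[OF C] right by fastforce
  then obtain a b where step: "a \<in> C" "b \<in> C" "covers a b" "a \<le> cr" "m < b"
    "\<forall>z\<in>C. z \<le> a \<or> b \<le> z"
    using max_chain_step_across_Jirr[OF C cr m] by blast
  show False
  proof (cases "b = top")
    case True
    with step(3) have "coatom a"
      unfolding coatom_def by simp
    with step(4) have "cr = a \<or> cr = top"
      using coatom_le_cases by blast
    then have "a = cr"
      using coatom_less_top[OF cr] by auto
    with not_right[OF C] step(1) right show False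
      by blast
  next
    case False
    obtain D where D: "max_chain D" "cr \<in> D" "{z\<in>C. z \<le> a} \<subseteq> D"
      using ex_max_chain_extending_below[OF C step(4)] by blast
    have "height m \<le> height a"
      by (rule height_le_lower_end_of_step[OF cl cr L m(2) C right step(1-5) False step(6) D])
    with chain_x_eq_below[OF C D(1) step(1) D(3) height_bot_le]
    have "chain_x pos C (height m) = chain_x pos D (height m)" .
    with not_right[OF D(1,2)] right show False
      by simp
  qed
qed

lemma ljsp_left_coatom:
  assumes cl: "coatom cl" and cr: "coatom cr" and L: "left_of pos cl cr"
    and m: "m \<in> Jirr" "\<not> m \<le> cr"
  shows "ljsp pos cl = m"
  unfolding ljsp_def
proof (rule Greatest_equality)
  have "cl \<noteq> cr"
    using L unfolding left_of_def by auto
  have "m \<le> cl"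
    using Jirr_le_other_coatom[OF cr cl _ m] \<open>cl \<noteq> cr\<close> by simp
  moreover have m_LBound: "m \<in> LBound pos"
    using Jirr_not_le_right_coatom_mem_LBound[OF cl cr L m] .
  ultimately show "m \<in> LBound pos \<inter> Jirr0 \<inter> {z. z \<le> cl}"
    using m(1) unfolding Jirr0_def by simp
  fix y
  assume y: "y \<in> LBound pos \<inter> Jirr0 \<inter> {z. z \<le> cl}"
  show "y \<le> m"
  proof (cases "y = bot")
    case False
    with y have "y \<in> Jirr"
      unfolding Jirr0_def by simp
    from y m_LBound have "y \<le> m \<or> m \<le> y"
      using LBound_comparable by blast
    moreover have "m \<le> y \<Longrightarrow> y = m"
      using Jirr_not_le_coatom_maximal[OF cr m \<open>y \<in> Jirr\<close>] by simp
    ultimately show ?thesis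
      by auto
  qed simp
qed

end

theorem lemma2p2:
  fixes pos :: "'a::{finite, distrib_lattice, bounded_lattice} \<Rightarrow> real \<times> real"
    and cl cr e :: 'a
  assumes "planar_diagram pos"
    and "coatom cl" and "coatom cr" and "cl \<notin> Jirr" and "cr \<notin> Jirr"
    and "cl \<noteq> cr" and "left_of pos cl cr"
    and "e = inf cl cr"
  shows "Jirr - {y. y \<le> e} = {ljsp pos cl, rjsp pos cr} \<and> ljsp pos cl \<noteq> rjsp pos cr
    \<and> {x \<in> Jirr. \<forall>y \<in> Jirr. x \<le> y \<longrightarrow> x = y} = {ljsp pos cl, rjsp pos cr}
    \<and> \<not> ljsp pos cl \<le> rjsp pos cr \<and> \<not> rjsp pos cr \<le> ljsp pos cl
    \<and> \<not> ljsp pos cl \<le> sup e (rjsp pos cr) \<and> \<not> rjsp pos cr \<le> sup e (ljsp pos cl)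
    \<and> \<not> e \<le> ljsp pos cl \<and> \<not> e \<le> rjsp pos cr"
proof -
  note cl = assms(2) and cr = assms(3) and L = assms(7) and e = assms(8)
  have "(bot::'a) \<noteq> top"
    using coatom_less_top[OF cl] by (metis bot.extremum_strict)
  with assms(1) interpret planar_distrib_lattice pos
    by unfold_locales
  from planar_diagram_mirror[OF assms(1)] \<open>bot \<noteq> top\<close>
  interpret mirrored: planar_distrib_lattice "\<lambda>x. mirror (pos x)"
    by unfold_locales
  obtain jl jr where jl: "jl \<in> Jirr" "\<not> jl \<le> cr" and jr: "jr \<in> Jirr" "\<not> jr \<le> cl"
    using ex_Jirr_not_le_coatom cl cr by metis
  have lj: "ljsp pos cl = jl"
    using ljsp_left_coatom[OF cl cr L jl] .
  have "left_of (\<lambda>x. mirror (pos x)) cr cl"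
    unfolding left_of_mirror using right_of_if_left_of[OF L] .
  with mirrored.ljsp_left_coatom[OF cr cl _ jr] have rj: "rjsp pos cr = jr"
    unfolding ljsp_mirror by simp
  have "jl \<le> cl" "jr \<le> cr"
    using Jirr_le_other_coatom cl cr assms(6) jl jr by metis+
  moreover have "\<not> e \<le> jl" "\<not> e \<le> jr"
    using inf_coatoms_le_Jirr_imp_eq[OF cl cr assms(6) jl] inf_coatoms_le_Jirr_imp_eq[OF cr cl _ jr]
      assms(4-6) jl(1) jr(1) e by (auto simp: inf_commute)
  ultimately show ?thesis
    unfolding lj rj e
    using Jirr_not_le_inf_coatoms[OF cl cr jl jr]
      maximal_Jirr_two_coatoms[OF coatom_iff_left_or_right[OF cl cr L] jl jr] jl jr
    by (auto intro: order_trans simp: le_infI1 le_infI2)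
qed

end
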